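(* Let $X$ be a $T_1$ space and $Q\subset C(X)$. The following are equivalent: (1) $Q$ is compact in $(C(X),\tau_\Gamma)$; (2) $Q$ is countably compact in $(C(X),\tau_\Gamma)$; (3) $Q$ is pseudocompact in $(C(X),\tau_\Gamma)$ (i.e. every continuous real-valued function on $Q$ with the subspace topology from $\tau_\Gamma$ is bounded).
   Context: $C(X)$ is the set of continuous real-valued functions on $X$, each identified with its graph in $X\times\mathbb{R}$. The graph topology $\tau_\Gamma$ on $C(X)$ has base $\{F_G: G\text{ open in }X\times\mathbb{R}\}$ where $F_G=\{f\in C(X): f\subset G\}$. *)

theory Defs
  imports "HOL-Analysis.Analysis"
begin

definition graph_of :: "'a topology \<Rightarrow> ('a \<Rightarrow> real) \<Rightarrow> ('a \<times> real) set" where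
  "graph_of X f = {(x, f x) | x. x \<in> topspace X}"

text \<open>C(X): continuous real-valued functions on X, each identified with its graph.\<close>
definition CX :: "'a topology \<Rightarrow> ('a \<times> real) set set" where
  "CX X = {graph_of X f | f. continuous_map X euclideanreal f}"

definition FG :: "'a topology \<Rightarrow> ('a \<times> real) set \<Rightarrow> ('a \<times> real) set set" where
  "FG X G = {f \<in> CX X. f \<subseteq> G}"

definition graph_topology :: "'a topology \<Rightarrow> ('a \<times> real) set topology" where
  "graph_topology X =
     subtopology
       (topology_generated_by {FG X G | G. openin (prod_topology X euclideanreal) G})
       (CX X)"

definition countably_compactin :: "'b topology \<Rightarrow> 'b set \<Rightarrow> bool" where
  "countably_compactin T S \<longleftrightarrow>
     S \<subseteq> topspace T \<and>
     (\<forall>\<U>. countable \<U> \<and> (\<forall>U \<in> \<U>. openin T U) \<and> S \<subseteq> \<Union>\<U>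
          \<longrightarrow> (\<exists>\<F>. finite \<F> \<and> \<F> \<subseteq> \<U> \<and> S \<subseteq> \<Union>\<F>))"

definition pseudocompactin :: "'b topology \<Rightarrow> 'b set \<Rightarrow> bool" where
  "pseudocompactin T S \<longleftrightarrow>
     S \<subseteq> topspace T \<and>
     (\<forall>f. continuous_map (subtopology T S) euclideanreal f \<longrightarrow> bounded (f ` S))"

end

theory Submission
  imports Defs
begin

text \<open>
  Compact \<open>\<Rightarrow>\<close> countably compact \<open>\<Rightarrow>\<close> pseudocompact holds in every topological space.
  For the converse we compare the graph topology with the topology of uniform convergence,
  given by the metric \<open>min 1 \<parallel>f - g\<parallel>\<^sub>\<infinity>\<close>; the graph topology is finer.  The main tool is
  a general criterion: a locally finite sequence of continuous bumps on \<open>Q\<close>, each peaking at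
  a point of \<open>Q\<close>, yields an unbounded continuous function, so \<open>Q\<close> is not pseudocompact.
  Using evaluation maps (continuous because \<open>X\<close> is \<open>T\<^sub>1\<close>) and the uniform distance to build
  such bumps, we show that a pseudocompact \<open>Q\<close>
  (1) has the same subspace topology for the graph and the uniform topology, because every
      basic neighbourhood \<open>F\<^sub>G\<close> of \<open>g \<in> Q\<close> contains a uniform ball around \<open>g\<close> within \<open>Q\<close>, and
  (2) is compact for the uniform metric, by the Bolzano-Weierstrass characterisation.
  Together these give compactness of \<open>Q\<close> in the graph topology.
\<close>

section \<open>Elements of C(X) as functions and the uniform distance\<close>

definition fun_of :: "('a \<times> real) set \<Rightarrow> 'a \<Rightarrow> real" where
  "fun_of S x = (THE y. (x, y) \<in> S)"

lemma fun_of_graph: "x \<in> topspace X \<Longrightarrow> fun_of (graph_of X f) x = f x"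
  unfolding fun_of_def graph_of_def by auto

lemma CX_elim:
  assumes "S \<in> CX X"
  obtains f where "continuous_map X euclideanreal f" "S = graph_of X f"
  using assms unfolding CX_def by auto

lemma continuous_fun_of: "S \<in> CX X \<Longrightarrow> continuous_map X euclideanreal (fun_of S)"
  by (metis CX_elim continuous_map_eq fun_of_graph)

lemma mem_CX_iff:
  assumes "S \<in> CX X"
  shows "p \<in> S \<longleftrightarrow> fst p \<in> topspace X \<and> snd p = fun_of S (fst p)"
proof -
  obtain f where f: "S = graph_of X f" using CX_elim[OF assms] by blast
  have "p \<in> graph_of X f \<longleftrightarrow> fst p \<in> topspace X \<and> snd p = f (fst p)"
    by (cases p) (auto simp: graph_of_def)
  then show ?thesis using f fun_of_graph by metis
qed

lemma CX_subset_iff: "S \<in> CX X \<Longrightarrow> S \<subseteq> G \<longleftrightarrow> (\<forall>x\<in>topspace X. (x, fun_of S x) \<in> G)"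
  by (auto simp: mem_CX_iff)

lemma CX_eqI:
  assumes "S \<in> CX X" "T \<in> CX X" "\<And>x. x \<in> topspace X \<Longrightarrow> fun_of S x = fun_of T x"
  shows "S = T"
  using assms by (auto simp: mem_CX_iff)

text \<open>
  The uniform distance on C(X), truncated at 1 so that it is finite for unbounded functions.
\<close>

definition unif_dist :: "'a topology \<Rightarrow> ('a \<times> real) set \<Rightarrow> ('a \<times> real) set \<Rightarrow> real" where
  "unif_dist X S T = Sup (insert 0 ((\<lambda>x. min 1 \<bar>fun_of S x - fun_of T x\<bar>) ` topspace X))"

lemma unif_dist_upper:
  "x \<in> topspace X \<Longrightarrow> min 1 \<bar>fun_of S x - fun_of T x\<bar> \<le> unif_dist X S T"
  unfolding unif_dist_def by (rule cSup_upper) (auto intro: bdd_aboveI[where M=1])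

lemma unif_dist_nonneg: "0 \<le> unif_dist X S T"
  unfolding unif_dist_def by (rule cSup_upper) (auto intro: bdd_aboveI[where M=1])

lemma unif_dist_le1: "unif_dist X S T \<le> 1"
  unfolding unif_dist_def by (rule cSup_least) auto

lemma unif_dist_least:
  "0 \<le> c \<Longrightarrow> (\<And>x. x \<in> topspace X \<Longrightarrow> min 1 \<bar>fun_of S x - fun_of T x\<bar> \<le> c) \<Longrightarrow> unif_dist X S T \<le> c"
  unfolding unif_dist_def by (rule cSup_least) auto

lemma unif_dist_less_pointwise:
  "unif_dist X S T < c \<Longrightarrow> c \<le> 1 \<Longrightarrow> x \<in> topspace X \<Longrightarrow> \<bar>fun_of S x - fun_of T x\<bar> < c"
  using unif_dist_upper[of x X S T] by linarith

lemma unif_dist_metric: "Metric_space (CX X) (unif_dist X)"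
proof
  fix S T U
  show "0 \<le> unif_dist X S T" by (rule unif_dist_nonneg)
  show "unif_dist X S T = unif_dist X T S"
    unfolding unif_dist_def by (simp add: abs_minus_commute)
  show "unif_dist X S U \<le> unif_dist X S T + unif_dist X T U"
  proof (rule unif_dist_least)
    show "0 \<le> unif_dist X S T + unif_dist X T U" by (simp add: unif_dist_nonneg)
    fix x assume "x \<in> topspace X"
    then show "min 1 \<bar>fun_of S x - fun_of U x\<bar> \<le> unif_dist X S T + unif_dist X T U"
      using unif_dist_upper[of x X S T] unif_dist_upper[of x X T U] by linarith
  qed
  assume S: "S \<in> CX X" and T: "T \<in> CX X"
  show "unif_dist X S T = 0 \<longleftrightarrow> S = T"
  proof
    assume zero: "unif_dist X S T = 0"
    show "S = T"
    proof (rule CX_eqI[OF S T])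
      fix x assume "x \<in> topspace X"
      then have "min 1 \<bar>fun_of S x - fun_of T x\<bar> \<le> 0"
        using unif_dist_upper[of x X S T] zero by simp
      then show "fun_of S x = fun_of T x"
        by (simp add: min_le_iff_disj)
    qed
  qed (simp add: unif_dist_least order_antisym unif_dist_nonneg)
qed

interpretation unif: Metric_space "CX X" "unif_dist X" for X
  by (rule unif_dist_metric)

abbreviation unif_top :: "'a topology \<Rightarrow> ('a \<times> real) set topology" where
  "unif_top X \<equiv> Metric_space.mtopology (CX X) (unif_dist X)"

section \<open>The graph topology\<close>

lemma topspace_graph_topology: "topspace (graph_topology X) = CX X"
proof -
  have "FG X (topspace X \<times> UNIV) = CX X"
    by (auto simp: FG_def mem_CX_iff)
  moreover have "openin (prod_topology X euclideanreal) (topspace X \<times> UNIV)"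
    by (metis openin_topspace topspace_euclidean topspace_prod_topology)
  ultimately have "\<Union>{FG X G | G. openin (prod_topology X euclideanreal) G} = CX X"
    by (auto simp: FG_def)
  then show ?thesis
    unfolding graph_topology_def by auto
qed

lemma openin_FG:
  "openin (prod_topology X euclideanreal) G \<Longrightarrow> openin (graph_topology X) (FG X G)"
  unfolding graph_topology_def openin_subtopology
  by (rule exI[of _ "FG X G"]) (auto intro!: topology_generated_by_Basis simp: FG_def)

lemma generate_topology_on_base_nbhd:
  assumes Int_closed: "\<forall>B\<in>\<B>. \<forall>C\<in>\<B>. B \<inter> C \<in> \<B>"
    and "generate_topology_on \<B> W" "q \<in> W"
  shows "\<exists>B\<in>\<B>. q \<in> B \<and> B \<subseteq> W"
  using assms(2,3)
proof (induction arbitrary: q rule: generate_topology_on.induct)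
  case Empty
  then show ?case by simp
next
  case (Int a b)
  then have "q \<in> a" "q \<in> b"
    by auto
  then obtain B C where "B \<in> \<B>" "q \<in> B" "B \<subseteq> a" "C \<in> \<B>" "q \<in> C" "C \<subseteq> b"
    using Int.IH by meson
  then show ?case
    using Int_closed by (intro bexI[of _ "B \<inter> C"]) auto
next
  case (UN K)
  then obtain k where k: "k \<in> K" "q \<in> k"
    by blast
  then obtain B where "B \<in> \<B>" "q \<in> B" "B \<subseteq> k"
    using UN.IH by meson
  then show ?case
    using k(1) by blast
next
  case (Basis s)
  then show ?case by blast
qed

lemma graph_topology_nbhd:
  assumes "openin (graph_topology X) U" "q \<in> U"
  obtains G where "openin (prod_topology X euclideanreal) G" "q \<in> FG X G" "FG X G \<subseteq> U"
proof -
  let ?\<B> = "{FG X G | G. openin (prod_topology X euclideanreal) G}"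
  obtain V where V: "generate_topology_on ?\<B> V" "U = V \<inter> CX X"
    using assms(1) unfolding graph_topology_def openin_subtopology openin_topology_generated_by_iff
    by auto
  have Int_closed: "\<forall>B\<in>?\<B>. \<forall>C\<in>?\<B>. B \<inter> C \<in> ?\<B>"
  proof (intro ballI)
    fix B C assume B: "B \<in> ?\<B>" and C: "C \<in> ?\<B>"
    obtain G where "B = FG X G" "openin (prod_topology X euclideanreal) G"
      using B by auto
    moreover obtain H where "C = FG X H" "openin (prod_topology X euclideanreal) H"
      using C by auto
    moreover have "FG X G \<inter> FG X H = FG X (G \<inter> H)"
      by (auto simp: FG_def)
    ultimately show "B \<inter> C \<in> ?\<B>"
      using openin_Int by auto
  qed
  have "q \<in> V"
    using assms(2) V(2) by simp
  then have "\<exists>B\<in>?\<B>. q \<in> B \<and> B \<subseteq> V"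
    by (rule generate_topology_on_base_nbhd[OF Int_closed V(1)])
  then obtain G where "openin (prod_topology X euclideanreal) G" "q \<in> FG X G" "FG X G \<subseteq> V"
    by auto
  then show ?thesis
    using V(2) by (intro that[of G]) (auto simp: FG_def)
qed

text \<open>
  The open tube of width \<open>c\<close> around the graph of \<open>q\<close>; the basic sets \<open>F_G\<close> of
  tubes compare the graph topology with the uniform one.
\<close>
definition tube :: "'a topology \<Rightarrow> ('a \<times> real) set \<Rightarrow> real \<Rightarrow> ('a \<times> real) set" where
  "tube X q c = {p \<in> topspace X \<times> UNIV. \<bar>snd p - fun_of q (fst p)\<bar> < c}"

lemma openin_tube:
  assumes "q \<in> CX X"
  shows "openin (prod_topology X euclideanreal) (tube X q c)"
proof -
  have "continuous_map (prod_topology X euclideanreal) euclideanreal (fun_of q \<circ> fst)"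
    by (rule continuous_map_compose[OF continuous_map_fst continuous_fun_of[OF assms]])
  then have "continuous_map (prod_topology X euclideanreal) euclideanreal
               (\<lambda>p. \<bar>snd p - fun_of q (fst p)\<bar>)"
    by (intro continuous_intros) (auto simp: o_def)
  from openin_continuous_map_preimage[OF this, of "{..<c}"] show ?thesis
    by (simp add: tube_def)
qed

lemma in_FG_tube:
  assumes "k \<in> CX X" "unif_dist X q k < c" "c \<le> 1"
  shows "k \<in> FG X (tube X q c)"
  using assms unif_dist_less_pointwise[OF assms(2,3)]
  by (auto simp: FG_def tube_def CX_subset_iff abs_minus_commute)

lemma FG_tube_unif_dist:
  assumes "k \<in> FG X (tube X q c)" "0 \<le> c"
  shows "unif_dist X q k \<le> c"
proof (rule unif_dist_least[OF assms(2)])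
  fix x assume "x \<in> topspace X"
  then have "(x, fun_of k x) \<in> tube X q c"
    using assms(1) by (auto simp: FG_def CX_subset_iff)
  then show "min 1 \<bar>fun_of q x - fun_of k x\<bar> \<le> c"
    by (auto simp: tube_def abs_minus_commute)
qed

text \<open>Uniform balls are open in the graph topology: around each of their points lies a tube.\<close>
lemma openin_graph_topology_mball:
  assumes "q \<in> CX X"
  shows "openin (graph_topology X) (unif.mball X q e)"
proof (cases "e > 1")
  case True
  then have "unif_dist X q k < e" for k
    using unif_dist_le1[of X q k] by linarith
  then have "unif.mball X q e = CX X"
    using assms by auto
  then show ?thesis
    by (metis openin_topspace topspace_graph_topology)
next
  case False
  show ?thesis
  proof (subst openin_subopen, intro ballI)
    fix k assume k: "k \<in> unif.mball X q e"
    define c where "c = (unif_dist X q k + e) / 2"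
    have c: "unif_dist X q k < c" "c < e" "c \<le> 1"
      using k False by (auto simp: c_def)
    have sub: "FG X (tube X q c) \<subseteq> unif.mball X q e"
    proof
      fix k' assume k': "k' \<in> FG X (tube X q c)"
      then have "unif_dist X q k' \<le> c"
        by (rule FG_tube_unif_dist) (use c unif_dist_nonneg[of X q k] in linarith)
      then show "k' \<in> unif.mball X q e"
        using k' c assms by (auto simp: FG_def)
    qed
    show "\<exists>T. openin (graph_topology X) T \<and> k \<in> T \<and> T \<subseteq> unif.mball X q e"
    proof (intro exI conjI)
      show "openin (graph_topology X) (FG X (tube X q c))"
        by (rule openin_FG[OF openin_tube[OF assms]])
      show "k \<in> FG X (tube X q c)"
        using k c by (intro in_FG_tube) auto
    qed (rule sub)
  qed
qed

lemma openin_graph_topology_if_unif: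
  assumes "openin (unif_top X) U"
  shows "openin (graph_topology X) U"
proof (subst openin_subopen, intro ballI)
  fix k assume "k \<in> U"
  moreover have "U \<subseteq> CX X \<and> (\<forall>x. x \<in> U \<longrightarrow> (\<exists>r>0. unif.mball X x r \<subseteq> U))"
    using unif.openin_mtopology assms by (rule iffD1)
  ultimately obtain r where r: "r > 0" "unif.mball X k r \<subseteq> U" and k: "k \<in> CX X"
    by blast
  show "\<exists>T. openin (graph_topology X) T \<and> k \<in> T \<and> T \<subseteq> U"
  proof (intro exI conjI)
    show "openin (graph_topology X) (unif.mball X k r)"
      by (rule openin_graph_topology_mball[OF k])
    show "k \<in> unif.mball X k r"
      using r k by simp
  qed (rule r(2))
qed

lemma continuous_map_graph_unif: "continuous_map (graph_topology X) (unif_top X) (\<lambda>k. k)"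
  unfolding continuous_map_def
proof (intro conjI allI impI)
  show "(\<lambda>k. k) \<in> topspace (graph_topology X) \<rightarrow> topspace (unif_top X)"
    by (simp add: topspace_graph_topology)
  fix U assume U: "openin (unif_top X) U"
  then have "{k \<in> topspace (graph_topology X). k \<in> U} = U"
    using openin_subset[OF U] by (auto simp: topspace_graph_topology)
  then show "openin (graph_topology X) {k \<in> topspace (graph_topology X). k \<in> U}"
    using openin_graph_topology_if_unif[OF U] by simp
qed

lemma continuous_unif_dist:
  assumes "h \<in> CX X"
  shows "continuous_map (graph_topology X) euclideanreal (\<lambda>k. unif_dist X k h)"
proof -
  let ?m = "metric (CX X, unif_dist X)"
  have "continuous_map (graph_topology X) (mtopology_of ?m) (\<lambda>k. k)"
    using continuous_map_graph_unif by simp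
  moreover have "continuous_map (graph_topology X) (mtopology_of ?m) (\<lambda>k. h)"
    using assms by (simp add: topspace_graph_topology)
  ultimately have "continuous_map (graph_topology X) euclideanreal (\<lambda>k. mdist ?m k h)"
    by (rule continuous_map_mdist)
  then show ?thesis
    by simp
qed

lemma continuous_eval:
  assumes "t1_space X" "x0 \<in> topspace X"
  shows "continuous_map (graph_topology X) euclideanreal (\<lambda>k. fun_of k x0)"
  unfolding continuous_map_def
proof (intro conjI allI impI)
  show "(\<lambda>k. fun_of k x0) \<in> topspace (graph_topology X) \<rightarrow> topspace euclideanreal"
    by simp
  fix V assume V: "openin euclideanreal V"
  define G where "G = topspace X \<times> UNIV - {x0} \<times> (- V)"
  have "closedin (prod_topology X euclideanreal) ({x0} \<times> (- V))"
    using V assms by (auto simp: closedin_prod_Times_iff t1_space_closedin_singleton)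
  then have "openin (prod_topology X euclideanreal) G"
    unfolding G_def by (metis openin_diff openin_topspace topspace_euclidean topspace_prod_topology)
  moreover have "k \<subseteq> G \<longleftrightarrow> fun_of k x0 \<in> V" if "k \<in> CX X" for k
    using assms(2) by (auto simp: CX_subset_iff[OF that] G_def)
  then have "{k \<in> topspace (graph_topology X). fun_of k x0 \<in> V} = FG X G"
    by (auto simp: FG_def topspace_graph_topology)
  ultimately show "openin (graph_topology X) {k \<in> topspace (graph_topology X). fun_of k x0 \<in> V}"
    using openin_FG by simp
qed

section \<open>Witnessing failure of pseudocompactness\<close>

lemma continuous_map_locally_finite_suminf:
  fixes f :: "nat \<Rightarrow> 'b \<Rightarrow> real"
  assumes cont: "\<And>n. continuous_map T euclideanreal (f n)"
    and locfin: "\<And>q. q \<in> topspace T \<Longrightarrow>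
                   \<exists>W M. openin T W \<and> q \<in> W \<and> (\<forall>s\<in>W. \<forall>n\<ge>M. f n s = 0)"
  shows "continuous_map T euclideanreal (\<lambda>s. \<Sum>n. f n s)"
    (is "continuous_map T _ ?\<Phi>")
proof -
  have partial_sum: "?\<Phi> s = (\<Sum>n<M. f n s)" if "\<forall>n\<ge>M. f n s = 0" for s M
    using that by (intro suminf_finite) auto
  show ?thesis
    unfolding continuous_map_def
  proof (intro conjI allI impI)
    show "?\<Phi> \<in> topspace T \<rightarrow> topspace euclideanreal"
      by simp
    fix U :: "real set" assume U: "openin euclideanreal U"
    show "openin T {s \<in> topspace T. ?\<Phi> s \<in> U}"
    proof (subst openin_subopen, intro ballI)
      fix s0 assume s0: "s0 \<in> {s \<in> topspace T. ?\<Phi> s \<in> U}"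
      then have "s0 \<in> topspace T"
        by simp
      then obtain W M where W: "openin T W" "s0 \<in> W" and zero: "\<forall>s\<in>W. \<forall>n\<ge>M. f n s = 0"
        using locfin by meson
      have "continuous_map T euclideanreal (\<lambda>s. \<Sum>n<M. f n s)"
        by (intro continuous_intros cont) auto
      then have "openin T (W \<inter> {s \<in> topspace T. (\<Sum>n<M. f n s) \<in> U})"
        using W(1) U by (intro openin_Int openin_continuous_map_preimage)
      moreover have "W \<inter> {s \<in> topspace T. (\<Sum>n<M. f n s) \<in> U} = W \<inter> {s \<in> topspace T. ?\<Phi> s \<in> U}"
        using zero partial_sum by auto
      ultimately show "\<exists>V. openin T V \<and> s0 \<in> V \<and> V \<subseteq> {s \<in> topspace T. ?\<Phi> s \<in> U}"
        using s0 W(2) by (intro exI[of _ "W \<inter> {s \<in> topspace T. ?\<Phi> s \<in> U}"]) auto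
    qed
  qed
qed

text \<open>
  A locally finite sequence of nonnegative continuous bumps on \<open>S\<close>, the \<open>n\<close>-th one peaking
  with value 1 at a point of \<open>S\<close>, shows that \<open>S\<close> is not pseudocompact: the continuous
  function \<open>\<Sum>n. n \<beta>\<^sub>n\<close> is unbounded on \<open>S\<close>.
\<close>
lemma locally_finite_bumps_not_pseudocompactin:
  fixes \<beta> :: "nat \<Rightarrow> 'b \<Rightarrow> real"
  assumes \<sigma>S: "\<And>n. \<sigma> n \<in> S"
    and cont: "\<And>n. continuous_map (subtopology T S) euclideanreal (\<beta> n)"
    and nonneg: "\<And>n s. \<beta> n s \<ge> 0"
    and peak: "\<And>n. \<beta> n (\<sigma> n) = 1"
    and locfin: "\<And>q. q \<in> S \<Longrightarrow>
                   \<exists>W M. openin (subtopology T S) W \<and> q \<in> W \<and> (\<forall>s\<in>W. \<forall>n\<ge>M. \<beta> n s = 0)"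
  shows "\<not> pseudocompactin T S"
proof
  assume pc: "pseudocompactin T S"
  define \<Phi> where "\<Phi> s = (\<Sum>n. real n * \<beta> n s)" for s
  have "continuous_map (subtopology T S) euclideanreal \<Phi>"
    unfolding \<Phi>_def
  proof (rule continuous_map_locally_finite_suminf)
    show "continuous_map (subtopology T S) euclideanreal (\<lambda>s. real n * \<beta> n s)" for n
      by (intro continuous_intros cont)
    fix q assume "q \<in> topspace (subtopology T S)"
    then have "q \<in> S"
      by simp
    then obtain W M where "openin (subtopology T S) W" "q \<in> W" "\<forall>s\<in>W. \<forall>n\<ge>M. \<beta> n s = 0"
      using locfin by meson
    then show "\<exists>W M. openin (subtopology T S) W \<and> q \<in> W \<and> (\<forall>s\<in>W. \<forall>n\<ge>M. real n * \<beta> n s = 0)"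
      by auto
  qed
  then have "bounded (\<Phi> ` S)"
    using pc unfolding pseudocompactin_def by auto
  then obtain B where B: "\<And>s. s \<in> S \<Longrightarrow> \<bar>\<Phi> s\<bar> \<le> B"
    unfolding bounded_real by auto
  have "real n \<le> \<Phi> (\<sigma> n)" for n
  proof -
    obtain W M where "\<sigma> n \<in> W" "\<forall>s\<in>W. \<forall>k\<ge>M. \<beta> k s = 0"
      using locfin[OF \<sigma>S] by meson
    then have "\<forall>k\<ge>M. \<beta> k (\<sigma> n) = 0"
      by auto
    then have "\<Phi> (\<sigma> n) = (\<Sum>k<max M (Suc n). real k * \<beta> k (\<sigma> n))"
      unfolding \<Phi>_def by (intro suminf_finite) (auto simp: not_less)
    moreover have "real n * \<beta> n (\<sigma> n) \<le> (\<Sum>k<max M (Suc n). real k * \<beta> k (\<sigma> n))"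
      using nonneg by (intro member_le_sum) auto
    ultimately show ?thesis
      using peak[of n] by simp
  qed
  then have "real (nat \<lceil>B\<rceil> + 1) \<le> B"
    using B[OF \<sigma>S] by (meson abs_ge_self order_trans)
  then show False
    by linarith
qed

text \<open>
  Cutting \<open>\<gamma>\<^sub>n\<close> down to the \<open>1/(n+1)\<close>-neighbourhood of \<open>\<sigma>\<^sub>n\<close>
  then yields a locally finite family.
\<close>
lemma separated_bumps_not_pseudocompactin:
  fixes d :: "'b \<Rightarrow> 'b \<Rightarrow> real" and \<gamma> :: "nat \<Rightarrow> 'b \<Rightarrow> real"
  assumes \<sigma>S: "\<And>n. \<sigma> n \<in> S"
    and dcont: "\<And>n. continuous_map (subtopology T S) euclideanreal (\<lambda>s. d s (\<sigma> n))"
    and dself: "\<And>n. d (\<sigma> n) (\<sigma> n) = 0"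
    and cont: "\<And>n. continuous_map (subtopology T S) euclideanreal (\<gamma> n)"
    and nonneg: "\<And>n s. \<gamma> n s \<ge> 0"
    and peak: "\<And>n. \<gamma> n (\<sigma> n) = 1"
    and separated: "\<And>q. q \<in> S \<Longrightarrow> \<exists>W r N. openin (subtopology T S) W \<and> q \<in> W \<and> r > 0 \<and>
                     (\<forall>n\<ge>N. \<forall>s\<in>W. \<gamma> n s = 0 \<or> d s (\<sigma> n) \<ge> r)"
  shows "\<not> pseudocompactin T S"
proof (rule locally_finite_bumps_not_pseudocompactin)
  let ?\<beta> = "\<lambda>n s. \<gamma> n s * max 0 (1 - real (Suc n) * d s (\<sigma> n))"
  show "\<sigma> n \<in> S" for n
    by (rule \<sigma>S)
  show "continuous_map (subtopology T S) euclideanreal (?\<beta> n)" for n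
    by (intro continuous_intros cont dcont)
  show "?\<beta> n s \<ge> 0" for n s
    using nonneg by simp
  show "?\<beta> n (\<sigma> n) = 1" for n
    using peak dself by simp
  fix q assume "q \<in> S"
  then obtain W r N where W: "openin (subtopology T S) W" "q \<in> W" "r > 0"
    and sep: "\<forall>n\<ge>N. \<forall>s\<in>W. \<gamma> n s = 0 \<or> d s (\<sigma> n) \<ge> r"
    using separated by meson
  obtain M :: nat where M: "1 / r < real M"
    using reals_Archimedean2 by blast
  have "?\<beta> n s = 0" if s: "s \<in> W" and n: "n \<ge> max N M" for n s
  proof (cases "\<gamma> n s = 0")
    case False
    then have "d s (\<sigma> n) \<ge> r"
      using sep s n by auto
    moreover have "1 < real (Suc n) * r"
    proof -
      have "1 < real M * r"
        using M \<open>r > 0\<close> by (simp add: field_simps)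
      also have "\<dots> \<le> real (Suc n) * r"
        using n \<open>r > 0\<close> by (intro mult_right_mono) auto
      finally show ?thesis .
    qed
    moreover have "real (Suc n) * r \<le> real (Suc n) * d s (\<sigma> n)"
      using calculation(1) by (intro mult_left_mono) auto
    ultimately have "1 \<le> real (Suc n) * d s (\<sigma> n)"
      by linarith
    then show ?thesis
      by simp
  qed simp
  then show "\<exists>W M. openin (subtopology T S) W \<and> q \<in> W \<and> (\<forall>s\<in>W. \<forall>n\<ge>M. ?\<beta> n s = 0)"
    using W by blast
qed

section \<open>Two facts about sequences in metric spaces\<close>

lemma (in Metric_space) eventually_far_from_other_point:
  assumes q: "q \<in> M" and g: "g \<in> M" "q \<noteq> g"
    and \<sigma>: "\<And>n. \<sigma> n \<in> M" "\<And>n. d (\<sigma> n) g < 1 / real (Suc n)"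
  shows "\<exists>N. \<forall>n\<ge>N. \<forall>s\<in>mball q (d q g / 3). d q g / 3 \<le> d s (\<sigma> n)"
proof -
  define c where "c = d q g"
  have "c > 0"
    using q g by (simp add: c_def)
  obtain N :: nat where N: "3 / c < real N"
    using reals_Archimedean2 by blast
  have far: "c / 3 \<le> d s (\<sigma> n)" if n: "n \<ge> N" and s: "s \<in> mball q (c / 3)" for n s
  proof -
    have "3 / c < real (Suc n)"
      using N n by linarith
    then have "1 / real (Suc n) < c / 3"
      using \<open>c > 0\<close> by (simp add: field_simps)
    then have "d (\<sigma> n) g < c / 3"
      using \<sigma>(2)[of n] by linarith
    moreover have "c \<le> d q s + d s g" "d s g \<le> d s (\<sigma> n) + d (\<sigma> n) g"
      using q g s \<sigma>(1) unfolding c_def by (auto intro: triangle)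
    ultimately show ?thesis
      using s by simp
  qed
  show ?thesis
    using far unfolding c_def by (intro exI[of _ N]) simp
qed

lemma (in Metric_space) eventually_far_from_non_accumulation_point:
  fixes \<sigma> :: "nat \<Rightarrow> 'a"
  assumes q: "q \<in> M" and \<sigma>: "inj \<sigma>" "range \<sigma> \<subseteq> M"
    and not_acc: "q \<notin> mtopology derived_set_of (range \<sigma>)"
  shows "\<exists>r>0. \<exists>N. \<forall>n\<ge>N. \<forall>s\<in>mball q r. r \<le> d s (\<sigma> n)"
proof -
  obtain U where U: "openin mtopology U" "q \<in> U"
    and isolated: "\<And>n. \<sigma> n \<in> U \<Longrightarrow> \<sigma> n = q"
    using not_acc q unfolding in_derived_set_of topspace_mtopology by auto
  obtain r where r: "r > 0" "mball q r \<subseteq> U"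
    using U openin_mtopology by meson
  have "{n. d (\<sigma> n) q < r} \<subseteq> \<sigma> -` {q}"
  proof
    fix n assume "n \<in> {n. d (\<sigma> n) q < r}"
    then have "\<sigma> n \<in> mball q r"
      using q \<sigma>(2) by (auto simp: commute)
    then show "n \<in> \<sigma> -` {q}"
      using r(2) isolated by auto
  qed
  moreover have "finite (\<sigma> -` {q})"
    using \<sigma>(1) by (simp add: finite_vimageI)
  ultimately have "finite {n. d (\<sigma> n) q < r}"
    by (rule finite_subset)
  then obtain N where N: "{n. d (\<sigma> n) q < r} \<subseteq> {..<N}"
    using finite_nat_bounded by meson
  have far: "r / 2 \<le> d s (\<sigma> n)" if "n \<ge> N" "s \<in> mball q (r / 2)" for n s
  proof -
    have "n \<notin> {n. d (\<sigma> n) q < r}"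
      using N that(1) by auto
    moreover have "d (\<sigma> n) q \<le> d (\<sigma> n) s + d s q"
      using that(2) \<sigma>(2) q by (intro triangle) auto
    ultimately show ?thesis
      using that(2) by (simp add: commute)
  qed
  show ?thesis
    using far r(1) by (intro exI[of _ "r / 2"] conjI exI[of _ N]) auto
qed

section \<open>Pseudocompact sets in the graph topology\<close>

lemma openin_diff_locally_finite_fibres:
  assumes t1: "t1_space X" and x: "\<And>n. x n \<in> topspace X"
    and locfin: "\<And>z. z \<in> topspace X \<Longrightarrow> \<exists>V. openin X V \<and> z \<in> V \<and> finite {n. x n \<in> V}"
    and K: "\<And>n. closed (K n)"
    and G: "openin (prod_topology X euclideanreal) G"
  shows "openin (prod_topology X euclideanreal) (G - (\<Union>n. {x n} \<times> K n))"
proof (rule openin_diff[OF G closedin_locally_finite_Union])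
  show "closedin (prod_topology X euclideanreal) F" if "F \<in> range (\<lambda>n. {x n} \<times> K n)" for F
    using that K x t1 by (auto simp: closedin_prod_Times_iff t1_space_closedin_singleton)
  show "locally_finite_in (prod_topology X euclideanreal) (range (\<lambda>n. {x n} \<times> K n))"
    unfolding locally_finite_in_def
  proof (intro conjI ballI)
    show "\<Union> (range (\<lambda>n. {x n} \<times> K n)) \<subseteq> topspace (prod_topology X euclideanreal)"
      using x by auto
    fix p assume "p \<in> topspace (prod_topology X euclideanreal)"
    then have "fst p \<in> topspace X"
      by auto
    then obtain V where V: "openin X V" "fst p \<in> V" "finite {n. x n \<in> V}"
      using locfin by meson
    have "{F \<in> range (\<lambda>n. {x n} \<times> K n). F \<inter> (V \<times> UNIV) \<noteq> {}}
            \<subseteq> (\<lambda>n. {x n} \<times> K n) ` {n. x n \<in> V}"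
      by auto
    then have "finite {F \<in> range (\<lambda>n. {x n} \<times> K n). F \<inter> (V \<times> UNIV) \<noteq> {}}"
      using V(3) finite_subset by blast
    moreover have "openin (prod_topology X euclideanreal) (V \<times> UNIV)"
      using V(1) by (simp add: openin_prod_Times_iff)
    ultimately show "\<exists>W. openin (prod_topology X euclideanreal) W \<and> p \<in> W \<and>
                       finite {F \<in> range (\<lambda>n. {x n} \<times> K n). F \<inter> W \<noteq> {}}"
      using V(2) by (intro exI[of _ "V \<times> UNIV"]) (auto simp: mem_Times_iff)
  qed
qed

text \<open>
  Then the points
  \<open>x\<^sub>n\<close> are locally finite: near \<open>z\<close>, a box around \<open>(z, g z)\<close> inside \<open>G\<close> catches the graph
  of \<open>h\<^sub>n\<close> for all large \<open>n\<close>.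
\<close>
lemma escape_points_locally_finite:
  assumes g: "g \<in> CX X" "g \<subseteq> G" and G: "openin (prod_topology X euclideanreal) G"
    and h: "\<And>n. unif_dist X (h n) g < 1 / real (Suc n)"
    and x: "\<And>n. x n \<in> topspace X" "\<And>n. (x n, fun_of (h n) (x n)) \<notin> G"
    and z: "z \<in> topspace X"
  shows "\<exists>W. openin X W \<and> z \<in> W \<and> finite {n. x n \<in> W}"
proof -
  have "(z, fun_of g z) \<in> G"
    using g z by (simp add: CX_subset_iff)
  then obtain U V where UV: "openin X U" "open V" "z \<in> U" "fun_of g z \<in> V" "U \<times> V \<subseteq> G"
    using G unfolding openin_prod_topology_alt by force
  obtain e0 where e0: "e0 > 0" "ball (fun_of g z) e0 \<subseteq> V"
    using UV(2,4) open_contains_ball by blast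
  define e where "e = min e0 1"
  have e: "e > 0" "e \<le> 1" "ball (fun_of g z) e \<subseteq> V"
    using e0 subset_ball[of e e0] by (auto simp: e_def)
  define W where "W = U \<inter> {z' \<in> topspace X. fun_of g z' \<in> ball (fun_of g z) (e / 2)}"
  have "openin X W"
    unfolding W_def
    by (intro openin_Int UV(1) openin_continuous_map_preimage[OF continuous_fun_of[OF g(1)]]) auto
  moreover have "z \<in> W"
    using z UV(3) e by (simp add: W_def)
  moreover obtain N :: nat where N: "2 / e < real N"
    using reals_Archimedean2 by blast
  have "{n. x n \<in> W} \<subseteq> {..<N}"
  proof (rule subsetI, rule ccontr)
    fix n assume "n \<in> {n. x n \<in> W}" and "n \<notin> {..<N}"
    then have xW: "x n \<in> U" "\<bar>fun_of g (x n) - fun_of g z\<bar> < e / 2" and "N \<le> n"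
      by (auto simp: W_def dist_real_def abs_minus_commute)
    then have "2 / e < real (Suc n)"
      using N by linarith
    then have "1 / real (Suc n) < e / 2"
      using e(1) by (simp add: field_simps)
    moreover have "\<bar>fun_of (h n) (x n) - fun_of g (x n)\<bar> < 1 / real (Suc n)"
      by (rule unif_dist_less_pointwise[OF h _ x(1)]) simp
    ultimately have "\<bar>fun_of (h n) (x n) - fun_of g (x n)\<bar> < e / 2"
      by linarith
    then have "fun_of (h n) (x n) \<in> ball (fun_of g z) e"
      using xW(2) unfolding mem_ball dist_real_def by linarith
    then show False
      using x(2)[of n] xW(1) e(3) UV(5) by blast
  qed
  then have "finite {n. x n \<in> W}"
    by (rule finite_subset) simp
  ultimately show ?thesis
    by (intro exI[of _ W]) simp
qed

lemma nbhd_avoiding_escape_values: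
  assumes t1: "t1_space X"
    and g: "g \<in> CX X" "g \<subseteq> G" and G: "openin (prod_topology X euclideanreal) G"
    and h: "\<And>n. unif_dist X (h n) g < 1 / real (Suc n)"
    and x: "\<And>n. x n \<in> topspace X" "\<And>n. (x n, fun_of (h n) (x n)) \<notin> G"
  obtains G' where "openin (prod_topology X euclideanreal) G'" "g \<subseteq> G'"
    "\<And>k n. k \<in> CX X \<Longrightarrow> k \<subseteq> G' \<Longrightarrow>
       \<bar>fun_of (h n) (x n) - fun_of g (x n)\<bar> / 2 < \<bar>fun_of k (x n) - fun_of (h n) (x n)\<bar>"
proof -
  define b where "b n = fun_of (h n) (x n)" for n
  define r where "r n = \<bar>b n - fun_of g (x n)\<bar> / 2" for n
  define G' where "G' = G - (\<Union>n. {x n} \<times> cball (b n) (r n))"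
  have "openin (prod_topology X euclideanreal) G'"
    unfolding G'_def
    using escape_points_locally_finite[OF g G h x]
    by (intro openin_diff_locally_finite_fibres[OF t1 x(1) _ _ G]) auto
  moreover have "g \<subseteq> G'"
    unfolding G'_def
  proof
    fix p assume "p \<in> g"
    then have p: "fst p \<in> topspace X" "snd p = fun_of g (fst p)"
      using g(1) by (auto simp: mem_CX_iff)
    have "p \<notin> {x n} \<times> cball (b n) (r n)" for n
    proof
      assume "p \<in> {x n} \<times> cball (b n) (r n)"
      then have "\<bar>b n - fun_of g (x n)\<bar> \<le> r n"
        using p by (auto simp: dist_real_def)
      moreover have "b n \<noteq> fun_of g (x n)"
        using x(2)[of n] g x(1)[of n] by (auto simp: b_def CX_subset_iff)
      ultimately show False
        by (simp add: r_def)
    qed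
    then show "p \<in> G - (\<Union>n. {x n} \<times> cball (b n) (r n))"
      using \<open>p \<in> g\<close> g(2) by auto
  qed
  moreover have "r n < \<bar>fun_of k (x n) - b n\<bar>" if "k \<in> CX X" "k \<subseteq> G'" for k n
  proof -
    have "(x n, fun_of k (x n)) \<in> G'"
      using that x(1) by (simp add: CX_subset_iff)
    then show ?thesis
      by (auto simp: G'_def dist_real_def abs_minus_commute)
  qed
  ultimately show ?thesis
    using that unfolding b_def r_def by blast
qed

text \<open>
  A sequence \<open>h\<^sub>n \<in> Q\<close> converging uniformly at rate \<open>1/(n+1)\<close> to \<open>g \<in> Q\<close>, whose graphs leave a
  neighbourhood \<open>G\<close> of the graph of \<open>g\<close> above points \<open>x\<^sub>n\<close>, contradicts pseudocompactness:
  bumps at the escape values \<open>h\<^sub>n(x\<^sub>n)\<close>, built from evaluation at \<open>x\<^sub>n\<close>, vanish near \<open>g\<close>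
  and are separated by the uniform distance elsewhere.
\<close>
lemma escaping_sequence_not_pseudocompactin:
  assumes t1: "t1_space X" and QC: "Q \<subseteq> CX X"
    and gQ: "g \<in> Q" and G: "openin (prod_topology X euclideanreal) G" and gG: "g \<subseteq> G"
    and h: "\<And>n. h n \<in> Q" "\<And>n. unif_dist X (h n) g < 1 / real (Suc n)"
    and x: "\<And>n. x n \<in> topspace X" "\<And>n. (x n, fun_of (h n) (x n)) \<notin> G"
  shows "\<not> pseudocompactin (graph_topology X) Q"
proof -
  have hC: "h n \<in> CX X" for n
    using h(1) QC by blast
  have gC: "g \<in> CX X"
    using gQ QC by blast
  define r where "r n = \<bar>fun_of (h n) (x n) - fun_of g (x n)\<bar> / 2" for n
  have r_pos: "r n > 0" for n
    using x(2)[of n] gC gG x(1)[of n] by (auto simp: r_def CX_subset_iff)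
  obtain G' where G': "openin (prod_topology X euclideanreal) G'" "g \<subseteq> G'"
    and avoid0: "\<And>k n. k \<in> CX X \<Longrightarrow> k \<subseteq> G' \<Longrightarrow>
        \<bar>fun_of (h n) (x n) - fun_of g (x n)\<bar> / 2 < \<bar>fun_of k (x n) - fun_of (h n) (x n)\<bar>"
    using nbhd_avoiding_escape_values[OF t1 gC gG G h(2) x] by blast
  have avoid: "r n < \<bar>fun_of k (x n) - fun_of (h n) (x n)\<bar>" if "k \<in> CX X" "k \<subseteq> G'" for k n
    using avoid0[OF that] by (simp add: r_def)
  define \<gamma> where "\<gamma> n k = max 0 (1 - \<bar>fun_of k (x n) - fun_of (h n) (x n)\<bar> / r n)" for n k
  show ?thesis
  proof (rule separated_bumps_not_pseudocompactin[where d = "unif_dist X" and \<sigma> = h and \<gamma> = \<gamma>])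
    show "h n \<in> Q" for n
      by (rule h(1))
    show "continuous_map (subtopology (graph_topology X) Q) euclideanreal (\<lambda>s. unif_dist X s (h n))" for n
      by (rule continuous_map_from_subtopology[OF continuous_unif_dist[OF hC]])
    show "unif_dist X (h n) (h n) = 0" for n
      using hC by simp
    show "continuous_map (subtopology (graph_topology X) Q) euclideanreal (\<gamma> n)" for n
    proof -
      have "continuous_map (graph_topology X) euclideanreal (\<lambda>k. fun_of k (x n))"
        by (rule continuous_eval[OF t1 x(1)])
      moreover have "r n \<noteq> 0"
        using r_pos[of n] by simp
      ultimately have "continuous_map (graph_topology X) euclideanreal (\<gamma> n)"
        unfolding \<gamma>_def by (intro continuous_intros) auto
      then show ?thesis
        by (rule continuous_map_from_subtopology)
    qed
    show "\<gamma> n s \<ge> 0" "\<gamma> n (h n) = 1" for n s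
      by (simp_all add: \<gamma>_def)
    fix q assume qQ: "q \<in> Q"
    show "\<exists>W r N. openin (subtopology (graph_topology X) Q) W \<and> q \<in> W \<and> r > 0 \<and>
                   (\<forall>n\<ge>N. \<forall>s\<in>W. \<gamma> n s = 0 \<or> unif_dist X s (h n) \<ge> r)"
    proof (cases "q = g")
      case True
      have "\<gamma> n s = 0" if "s \<in> Q \<inter> FG X G'" for n s
        using avoid[of s n] r_pos[of n] that by (auto simp: \<gamma>_def FG_def)
      moreover have "openin (subtopology (graph_topology X) Q) (Q \<inter> FG X G')"
        by (rule openin_subtopology_Int2[OF openin_FG[OF G'(1)]])
      ultimately show ?thesis
        using True qQ gC G'(2) by (intro exI[of _ "Q \<inter> FG X G'"] exI[of _ 1]) (auto simp: FG_def)
    next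
      case False
      have qC: "q \<in> CX X"
        using qQ QC by blast
      obtain N where far: "\<forall>n\<ge>N. \<forall>s\<in>unif.mball X q (unif_dist X q g / 3).
                        unif_dist X q g / 3 \<le> unif_dist X s (h n)"
        using unif.eventually_far_from_other_point[OF qC gC False hC h(2)] by blast
      moreover have "openin (subtopology (graph_topology X) Q) (Q \<inter> unif.mball X q (unif_dist X q g / 3))"
        by (rule openin_subtopology_Int2[OF openin_graph_topology_mball[OF qC]])
      moreover have "unif_dist X q g > 0"
        using qC gC False unif.nonneg[of X q g] unif.zero[OF qC gC] by linarith
      ultimately show ?thesis
        using qQ qC
        by (intro exI[of _ "Q \<inter> unif.mball X q (unif_dist X q g / 3)"] exI[of _ "unif_dist X q g / 3"]
            exI[of _ N]) auto
    qed
  qed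
qed

text \<open>
  Key lemma: on a pseudocompact \<open>Q\<close>, every basic neighbourhood \<open>F\<^sub>G\<close> of \<open>g \<in> Q\<close> contains a
  uniform ball around \<open>g\<close>; otherwise there is an escaping sequence as above.
\<close>
lemma pseudocompactin_unif_ball_in_FG:
  assumes t1: "t1_space X" and QC: "Q \<subseteq> CX X" and pc: "pseudocompactin (graph_topology X) Q"
    and gQ: "g \<in> Q" and G: "openin (prod_topology X euclideanreal) G" and gG: "g \<subseteq> G"
  shows "\<exists>\<epsilon>>0. \<forall>k\<in>Q. unif_dist X k g < \<epsilon> \<longrightarrow> k \<subseteq> G"
proof (rule ccontr)
  assume "\<not> ?thesis"
  then have "\<forall>n. \<exists>k. k \<in> Q \<and> unif_dist X k g < 1 / real (Suc n) \<and> \<not> k \<subseteq> G"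
    by (metis of_nat_0_less_iff zero_less_Suc zero_less_divide_1_iff)
  then obtain h where h: "\<And>n. h n \<in> Q" "\<And>n. unif_dist X (h n) g < 1 / real (Suc n)"
    and h_escapes: "\<And>n. \<not> h n \<subseteq> G"
    by metis
  have hC: "h n \<in> CX X" for n
    using h(1) QC by blast
  have "\<forall>n. \<exists>z. z \<in> topspace X \<and> (z, fun_of (h n) z) \<notin> G"
    using h_escapes CX_subset_iff[OF hC] by blast
  then obtain x where x: "\<And>n. x n \<in> topspace X" "\<And>n. (x n, fun_of (h n) (x n)) \<notin> G"
    by metis
  show False
    using escaping_sequence_not_pseudocompactin[OF t1 QC gQ G gG h x] pc by blast
qed

lemma pseudocompactin_unif_ball:
  assumes t1: "t1_space X" and QC: "Q \<subseteq> CX X" and pc: "pseudocompactin (graph_topology X) Q"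
    and gQ: "g \<in> Q" and U: "openin (graph_topology X) U" "g \<in> U"
  shows "\<exists>\<epsilon>>0. \<forall>k\<in>Q. unif_dist X k g < \<epsilon> \<longrightarrow> k \<in> U"
proof -
  obtain G where G: "openin (prod_topology X euclideanreal) G" "g \<in> FG X G" "FG X G \<subseteq> U"
    using graph_topology_nbhd[OF U] by blast
  then obtain \<epsilon> where "\<epsilon> > 0" and ball: "\<forall>k\<in>Q. unif_dist X k g < \<epsilon> \<longrightarrow> k \<subseteq> G"
    using pseudocompactin_unif_ball_in_FG[OF t1 QC pc gQ G(1)] by (auto simp: FG_def)
  have "k \<in> FG X G" if "k \<in> Q" "unif_dist X k g < \<epsilon>" for k
    using that ball QC by (auto simp: FG_def)
  then show ?thesis
    using G(3) \<open>\<epsilon> > 0\<close> by blast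
qed

text \<open>
  A pseudocompact \<open>Q\<close> is compact for the uniform metric: an infinite subset without
  accumulation point in \<open>Q\<close> would contain a sequence that stays away from every point of \<open>Q\<close>,
  and sharpened constant bumps along it contradict pseudocompactness.
\<close>
lemma pseudocompactin_imp_unif_compactin:
  assumes t1: "t1_space X" and QC: "Q \<subseteq> CX X" and pc: "pseudocompactin (graph_topology X) Q"
  shows "compactin (unif_top X) Q"
  unfolding unif.compactin_eq_Bolzano_Weierstrass
proof (intro conjI allI impI QC)
  fix T assume T: "T \<subseteq> Q \<and> infinite T"
  show "Q \<inter> unif_top X derived_set_of T \<noteq> {}"
  proof
    assume no_acc: "Q \<inter> unif_top X derived_set_of T = {}"
    obtain \<sigma> :: "nat \<Rightarrow> _" where \<sigma>: "inj \<sigma>" "range \<sigma> \<subseteq> T"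
      using infinite_countable_subset T by blast
    have \<sigma>Q: "\<sigma> n \<in> Q" for n
      using \<sigma>(2) T by blast
    have \<sigma>C: "\<sigma> n \<in> CX X" for n
      using \<sigma>Q QC by blast
    have "\<not> pseudocompactin (graph_topology X) Q"
    proof (rule separated_bumps_not_pseudocompactin[where d = "unif_dist X" and \<sigma> = \<sigma> and \<gamma> = "\<lambda>n s. 1"])
      show "\<sigma> n \<in> Q" for n
        by (rule \<sigma>Q)
      show "continuous_map (subtopology (graph_topology X) Q) euclideanreal (\<lambda>s. unif_dist X s (\<sigma> n))" for n
        by (rule continuous_map_from_subtopology[OF continuous_unif_dist[OF \<sigma>C]])
      show "unif_dist X (\<sigma> n) (\<sigma> n) = 0" for n
        using \<sigma>C by simp
      fix q assume qQ: "q \<in> Q"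
      then have qC: "q \<in> CX X"
        using QC by blast
      have "q \<notin> unif_top X derived_set_of (range \<sigma>)"
        using no_acc qQ derived_set_of_mono[OF \<sigma>(2)] by blast
      then obtain r N where far: "r > 0" "\<forall>n\<ge>N. \<forall>s\<in>unif.mball X q r. r \<le> unif_dist X s (\<sigma> n)"
        using unif.eventually_far_from_non_accumulation_point[OF qC \<sigma>(1)] \<sigma>C by blast
      moreover have "openin (subtopology (graph_topology X) Q) (Q \<inter> unif.mball X q r)"
        by (rule openin_subtopology_Int2[OF openin_graph_topology_mball[OF qC]])
      ultimately show "\<exists>W r N. openin (subtopology (graph_topology X) Q) W \<and> q \<in> W \<and> r > 0 \<and>
                         (\<forall>n\<ge>N. \<forall>s\<in>W. (1::real) = 0 \<or> r \<le> unif_dist X s (\<sigma> n))"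
        using qQ qC by (intro exI[of _ "Q \<inter> unif.mball X q r"] exI[of _ r] exI[of _ N]) auto
    qed auto
    then show False
      using pc by blast
  qed
qed

lemma pseudocompactin_subtopology_graph_eq_unif:
  assumes t1: "t1_space X" and QC: "Q \<subseteq> CX X" and pc: "pseudocompactin (graph_topology X) Q"
  shows "subtopology (graph_topology X) Q = subtopology (unif_top X) Q"
  unfolding topology_eq
proof (intro allI iffI)
  fix U assume "openin (subtopology (graph_topology X) Q) U"
  then obtain V where V: "openin (graph_topology X) V" "U = V \<inter> Q"
    unfolding openin_subtopology by blast
  show "openin (subtopology (unif_top X) Q) U"
  proof (subst openin_subopen, intro ballI)
    fix g assume "g \<in> U"
    then have gQ: "g \<in> Q" and gV: "g \<in> V"
      using V(2) by auto
    obtain \<epsilon> where "\<epsilon> > 0" and ball: "\<forall>k\<in>Q. unif_dist X k g < \<epsilon> \<longrightarrow> k \<in> V"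
      using pseudocompactin_unif_ball[OF t1 QC pc gQ V(1) gV] by blast
    have "openin (subtopology (unif_top X) Q) (unif.mball X g \<epsilon> \<inter> Q)"
      unfolding openin_subtopology by blast
    moreover have "unif.mball X g \<epsilon> \<inter> Q \<subseteq> U"
      using ball V(2) by (auto simp: unif.commute)
    ultimately show "\<exists>T. openin (subtopology (unif_top X) Q) T \<and> g \<in> T \<and> T \<subseteq> U"
      using gQ QC \<open>\<epsilon> > 0\<close> by (intro exI[of _ "unif.mball X g \<epsilon> \<inter> Q"]) auto
  qed
next
  fix U assume "openin (subtopology (unif_top X) Q) U"
  then show "openin (subtopology (graph_topology X) Q) U"
    unfolding openin_subtopology using openin_graph_topology_if_unif by blast
qed

lemma pseudocompactin_imp_compactin:
  assumes "t1_space X" "Q \<subseteq> CX X" "pseudocompactin (graph_topology X) Q"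
  shows "compactin (graph_topology X) Q"
proof -
  have "compactin (subtopology (unif_top X) Q) Q"
    using pseudocompactin_imp_unif_compactin[OF assms] by (simp add: compactin_subtopology)
  then have "compactin (subtopology (graph_topology X) Q) Q"
    by (simp add: pseudocompactin_subtopology_graph_eq_unif[OF assms])
  then show ?thesis
    by (simp add: compactin_subtopology)
qed

lemma compactin_imp_countably_compactin: "compactin T S \<Longrightarrow> countably_compactin T S"
  unfolding compactin_def countably_compactin_def by blast

text \<open>
  A real function on a countably compact set is bounded: the open sets
  \<open>{s. \<bar>f s\<bar> < n}\<close> form a countable cover.
\<close>
lemma countably_compactin_imp_pseudocompactin:
  assumes cc: "countably_compactin T S"
  shows "pseudocompactin T S"
  unfolding pseudocompactin_def
proof (intro conjI allI impI)
  show ST: "S \<subseteq> topspace T"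
    using cc by (simp add: countably_compactin_def)
  fix f assume f: "continuous_map (subtopology T S) euclideanreal f"
  have "\<exists>U. openin T U \<and> {s \<in> S. \<bar>f s\<bar> < real n} = U \<inter> S" for n :: nat
  proof -
    have "openin (subtopology T S) {s \<in> topspace (subtopology T S). f s \<in> {-real n<..<real n}}"
      by (rule openin_continuous_map_preimage[OF f]) simp
    moreover have "{s \<in> topspace (subtopology T S). f s \<in> {-real n<..<real n}} = {s \<in> S. \<bar>f s\<bar> < real n}"
      using ST by auto
    ultimately show ?thesis
      unfolding openin_subtopology by auto
  qed
  then obtain U where U: "\<And>n. openin T (U n)" "\<And>n. {s \<in> S. \<bar>f s\<bar> < real n} = U n \<inter> S"
    by metis
  have mem: "s \<in> U n \<longleftrightarrow> \<bar>f s\<bar> < real n" if "s \<in> S" for s n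
    using U(2)[of n] that by (simp add: set_eq_iff) metis
  have "S \<subseteq> \<Union>(range U)"
  proof
    fix s assume s: "s \<in> S"
    obtain n :: nat where "\<bar>f s\<bar> < real n"
      using reals_Archimedean2 by blast
    then show "s \<in> \<Union>(range U)"
      using mem[OF s] by blast
  qed
  moreover have "countable (range U)" "\<forall>V\<in>range U. openin T V"
    using U(1) by auto
  ultimately obtain \<F> where \<F>: "finite \<F>" "\<F> \<subseteq> range U" "S \<subseteq> \<Union>\<F>"
    using cc unfolding countably_compactin_def by meson
  then obtain I where I: "finite I" "\<F> = U ` I"
    using finite_subset_image by metis
  obtain k where k: "I \<subseteq> {..<k}"
    using finite_nat_bounded[OF I(1)] by blast
  have "\<bar>f s\<bar> \<le> real k" if s: "s \<in> S" for s
  proof -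
    obtain i where "i \<in> I" "s \<in> U i"
      using \<F>(3) I(2) s by blast
    then have "\<bar>f s\<bar> < real i" "i < k"
      using mem[OF s] k by auto
    then show ?thesis
      by simp
  qed
  then show "bounded (f ` S)"
    unfolding bounded_real by blast
qed

theorem proposition2p4:
  fixes X :: "'a topology" and Q :: "('a \<times> real) set set"
  assumes "t1_space X" and "Q \<subseteq> CX X"
  shows "(compactin (graph_topology X) Q \<longleftrightarrow> countably_compactin (graph_topology X) Q)
       \<and> (countably_compactin (graph_topology X) Q \<longleftrightarrow> pseudocompactin (graph_topology X) Q)"
  using compactin_imp_countably_compactin[of "graph_topology X" Q]
    countably_compactin_imp_pseudocompactin[of "graph_topology X" Q]
    pseudocompactin_imp_compactin[OF assms]
  by blast

end
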